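(* Let $\Omega$ be a compact metric space, $\varphi:\Omega\to\Omega$ continuous, and let $\mathcal{V}=\{V_n\}\subset\mathcal{L}(X^* )$ be an ergodic operator sequence converging in the $\mathrm{W^*O}$-topology to an operator $Q$. Then for every $\varphi$-ergodic Borel probability measure $\mu$ on $\Omega$ the set $\Omega_{\mu,\mathcal{V}}=\{\omega\in\Omega:Q\delta_\omega=\mu\}$ is a Borel set with $\mu(\Omega_{\mu,\mathcal{V}})=1$.
   Context: $X=C(\Omega)$, $X^*$ the space of Radon measures, pairing $(x,\mu)$; $Ux=x\circ\varphi$, $V=U^*$. $\mathrm{W^*O}$-convergence $T_n\to T$ means $(x,T_n\mu)\to(x,T\mu)$ for all $x\in X,\mu\in X^*$. A sequence $\{V_n\}\subseteq\operatorname{co}\{V^k:k\in\mathbb{N}_0\}$ is ergodic if $(x,(\operatorname{Id}-V)V_n\mu)\to0$ for all $x\in X,\mu\in X^*$. $\delta_\omega$ is the Dirac measure at $\omega$; thus $Q\delta_\omega$ is the weak-star limit of $V_n\delta_\omega$. *)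

theory Defs
  imports "HOL-Probability.Probability"
begin

text \<open>X = C(Omega) is the type of bounded continuous real functions on the compact
metric space Omega (all continuous functions are bounded on a compact space).
X* is realised as the continuous dual of X; by the Riesz representation theorem
these are exactly the (signed) Radon measures, the pairing (x, mu) being application.\<close>

type_synonym 'a dualC = "('a \<Rightarrow>\<^sub>C real) \<Rightarrow>\<^sub>L real"

definition Uop :: "('a::metric_space \<Rightarrow> 'a) \<Rightarrow> ('a \<Rightarrow>\<^sub>C real) \<Rightarrow>\<^sub>L ('a \<Rightarrow>\<^sub>C real)" where
  "Uop \<phi> = Blinfun (\<lambda>x. Bcontfun (\<lambda>\<omega>. apply_bcontfun x (\<phi> \<omega>)))"

definition Vop :: "('a::metric_space \<Rightarrow> 'a) \<Rightarrow> 'a dualC \<Rightarrow>\<^sub>L 'a dualC" where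
  "Vop \<phi> = Blinfun (\<lambda>\<nu>. \<nu> o\<^sub>L Uop \<phi>)"

definition Vpow :: "('a::metric_space \<Rightarrow> 'a) \<Rightarrow> nat \<Rightarrow> 'a dualC \<Rightarrow>\<^sub>L 'a dualC" where
  "Vpow \<phi> k = ((\<lambda>T. Vop \<phi> o\<^sub>L T) ^^ k) id_blinfun"

definition dirac_fun :: "'a::metric_space \<Rightarrow> 'a dualC" where
  "dirac_fun \<omega> = Blinfun (\<lambda>x. apply_bcontfun x \<omega>)"

definition ergodic_op_seq :: "('a::metric_space \<Rightarrow> 'a) \<Rightarrow> (nat \<Rightarrow> 'a dualC \<Rightarrow>\<^sub>L 'a dualC) \<Rightarrow> bool" where
  "ergodic_op_seq \<phi> Vs \<longleftrightarrow>
     (\<forall>n. Vs n \<in> convex hull (range (Vpow \<phi>))) \<and>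
     (\<forall>x \<nu>. (\<lambda>n. blinfun_apply (Vs n \<nu> - Vop \<phi> (Vs n \<nu>)) x) \<longlonglongrightarrow> 0)"

definition wstar_op_conv :: "(nat \<Rightarrow> ('a::metric_space) dualC \<Rightarrow>\<^sub>L 'a dualC) \<Rightarrow> ('a dualC \<Rightarrow>\<^sub>L 'a dualC) \<Rightarrow> bool" where
  "wstar_op_conv Ts T \<longleftrightarrow> (\<forall>x \<nu>. (\<lambda>n. blinfun_apply (Ts n \<nu>) x) \<longlonglongrightarrow> blinfun_apply (T \<nu>) x)"

definition phi_ergodic :: "('a::metric_space \<Rightarrow> 'a) \<Rightarrow> 'a measure \<Rightarrow> bool" where
  "phi_ergodic \<phi> \<mu> \<longleftrightarrow> prob_space \<mu> \<and> sets \<mu> = sets borel \<and>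
     \<phi> \<in> measurable \<mu> \<mu> \<and> distr \<mu> \<mu> \<phi> = \<mu> \<and>
     (\<forall>A\<in>sets \<mu>. \<phi> -` A = A \<longrightarrow> emeasure \<mu> A = 0 \<or> emeasure \<mu> A = 1)"

end

theory Submission
  imports Defs
begin

text \<open>For \<open>T\<close> in the convex hull of the powers \<open>V\<^sup>k\<close>, the function \<open>\<omega> \<mapsto> (x, T \<delta>\<^sub>\<omega>)\<close> is a convex
  combination of the functions \<open>x \<circ> \<phi>\<^sup>k\<close>: it is continuous, bounded by \<open>\<parallel>x\<parallel>\<close>, and has \<open>\<mu>\<close>-integral
  \<open>\<integral> x d\<mu>\<close> because \<open>\<mu>\<close> is \<open>\<phi>\<close>-invariant. Passing to the W*O-limit, \<open>\<omega> \<mapsto> (x, Q \<delta>\<^sub>\<omega>)\<close> is Borel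
  measurable with the same integral (dominated convergence), and the ergodicity of \<open>(V\<^sub>n)\<close> makes
  it \<open>\<phi>\<close>-invariant. Ergodicity of \<open>\<mu>\<close> forces an invariant function to equal its mean almost
  everywhere, so \<open>(x, Q \<delta>\<^sub>\<omega>) = \<integral> x d\<mu>\<close> for \<open>\<mu>\<close>-almost every \<open>\<omega>\<close>, for each fixed \<open>x\<close>. Since
  \<open>C(\<Omega>)\<close> is separable and both sides are continuous in \<open>x\<close>, it suffices to impose this for
  countably many \<open>x\<close>, which yields both measurability and full measure of \<open>\<Omega>\<^bsub>\<mu>,\<V>\<^esub>\<close>.\<close>

lemma dirac_fun_apply [simp]: "dirac_fun \<omega> x = apply_bcontfun x \<omega>"
proof -
  have "bounded_linear (\<lambda>x::'a \<Rightarrow>\<^sub>C real. apply_bcontfun x \<omega>)"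
    by (rule bounded_linear_intro[where K=1]) (auto simp: norm_bounded[where 'b=real, simplified])
  then show ?thesis unfolding dirac_fun_def by (simp add: bounded_linear_Blinfun_apply)
qed

lemma bcontfun_comp_continuous:
  fixes x :: "'a::metric_space \<Rightarrow>\<^sub>C 'b::metric_space"
  assumes "continuous_on UNIV \<phi>"
  shows "(\<lambda>\<omega>. apply_bcontfun x (\<phi> \<omega>)) \<in> bcontfun"
  using continuous_on_compose2[OF continuous_on_apply_bcontfun assms subset_UNIV]
    bounded_subset[OF bounded_apply_bcontfun[of x]]
  by (auto simp: bcontfun_def image_subset_iff)

lemma Uop_apply:
  assumes "continuous_on UNIV \<phi>"
  shows "Uop \<phi> x \<omega> = apply_bcontfun x (\<phi> \<omega>)"
proof -
  note comp = bcontfun_comp_continuous[OF assms]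
  have "bounded_linear (\<lambda>x::'a \<Rightarrow>\<^sub>C real. Bcontfun (\<lambda>\<omega>. apply_bcontfun x (\<phi> \<omega>)))"
  proof (rule bounded_linear_intro[where K=1])
    fix x y :: "'a \<Rightarrow>\<^sub>C real" and r :: real
    show "Bcontfun (\<lambda>\<omega>. apply_bcontfun (x + y) (\<phi> \<omega>))
        = Bcontfun (\<lambda>\<omega>. apply_bcontfun x (\<phi> \<omega>)) + Bcontfun (\<lambda>\<omega>. apply_bcontfun y (\<phi> \<omega>))"
      using comp[of "x + y"] by (intro bcontfun_eqI) (simp add: Bcontfun_inverse comp)
    show "Bcontfun (\<lambda>\<omega>. apply_bcontfun (r *\<^sub>R x) (\<phi> \<omega>)) = r *\<^sub>R Bcontfun (\<lambda>\<omega>. apply_bcontfun x (\<phi> \<omega>))"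
      using comp[of "r *\<^sub>R x"] by (intro bcontfun_eqI) (simp add: Bcontfun_inverse comp)
    show "norm (Bcontfun (\<lambda>\<omega>. apply_bcontfun x (\<phi> \<omega>))) \<le> norm x * 1"
      by (rule norm_bound) (simp add: Bcontfun_inverse comp norm_bounded[where 'b=real, simplified])
  qed
  then show ?thesis
    unfolding Uop_def by (simp add: bounded_linear_Blinfun_apply Bcontfun_inverse comp)
qed

lemma Vop_apply [simp]: "Vop \<phi> \<nu> = \<nu> o\<^sub>L Uop \<phi>"
  unfolding Vop_def
  by (simp add: bounded_linear_Blinfun_apply
      bounded_bilinear.bounded_linear_left[OF bounded_bilinear_blinfun_compose])

lemma continuous_on_funpow:
  fixes \<phi> :: "'a::topological_space \<Rightarrow> 'a"
  assumes "continuous_on UNIV \<phi>"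
  shows "continuous_on UNIV (\<phi> ^^ k)"
proof (induction k)
  case (Suc k)
  then show ?case
    by (simp add: continuous_on_compose2[OF assms])
qed (simp add: continuous_on_id)

lemma Vpow_dirac_apply:
  assumes "continuous_on UNIV \<phi>"
  shows "Vpow \<phi> k (dirac_fun \<omega>) x = apply_bcontfun x ((\<phi> ^^ k) \<omega>)"
proof (induction k arbitrary: x)
  case (Suc k)
  then show ?case by (simp add: Vpow_def Uop_apply[OF assms])
qed (simp add: Vpow_def)

lemma abs_diff_convex_sum_le:
  fixes w q :: "'b \<Rightarrow> real"
  assumes nonneg: "\<And>d. 0 \<le> w d" and sum_one: "(\<Sum>d\<in>N. w d) = 1"
    and close: "\<And>d. d \<in> N \<Longrightarrow> w d \<noteq> 0 \<Longrightarrow> \<bar>y - q d\<bar> \<le> e"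
  shows "\<bar>y - (\<Sum>d\<in>N. q d * w d)\<bar> \<le> e"
proof -
  have "(\<Sum>d\<in>N. w d * (y - q d)) = y * (\<Sum>d\<in>N. w d) - (\<Sum>d\<in>N. q d * w d)"
    by (simp add: algebra_simps sum_subtractf sum_distrib_left)
  then have "y - (\<Sum>d\<in>N. q d * w d) = (\<Sum>d\<in>N. w d * (y - q d))"
    using sum_one by simp
  also have "\<bar>\<dots>\<bar> \<le> (\<Sum>d\<in>N. w d * \<bar>y - q d\<bar>)"
    using sum_abs[of "\<lambda>d. w d * (y - q d)" N] nonneg by (simp add: abs_mult)
  also have "\<dots> \<le> (\<Sum>d\<in>N. w d * e)"
    using nonneg close by (intro sum_mono) (metis mult_left_mono mult_zero_left order_refl)
  also have "\<dots> = e"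
    using sum_one by (simp add: sum_distrib_right[symmetric])
  finally show ?thesis .
qed

definition tent_partition :: "'a::metric_space set \<Rightarrow> real \<Rightarrow> 'a \<Rightarrow> 'a \<Rightarrow> real" where
  "tent_partition N r d \<omega> = max 0 (r - dist d \<omega>) / (\<Sum>d'\<in>N. max 0 (r - dist d' \<omega>))"

lemma tent_partition:
  fixes N :: "'a::metric_space set"
  assumes "finite N" and cover: "\<And>\<omega>. \<exists>d\<in>N. dist d \<omega> < r"
  shows "continuous_on UNIV (tent_partition N r d)"
    and "0 \<le> tent_partition N r d \<omega>"
    and "(\<Sum>d\<in>N. tent_partition N r d \<omega>) = 1"
    and "tent_partition N r d \<omega> \<noteq> 0 \<Longrightarrow> dist d \<omega> < r"
proof -
  have pos: "0 < (\<Sum>d'\<in>N. max 0 (r - dist d' \<omega>))" for \<omega>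
  proof -
    obtain d where "d \<in> N" "dist d \<omega> < r"
      using cover by blast
    then show ?thesis
      using \<open>finite N\<close> by (intro sum_pos2[of N d]) auto
  qed
  show "continuous_on UNIV (tent_partition N r d)"
    unfolding tent_partition_def[abs_def] using pos
    by (intro continuous_intros) (auto simp: less_le)
  show "0 \<le> tent_partition N r d \<omega>"
    unfolding tent_partition_def using pos[of \<omega>] by simp
  show "(\<Sum>d\<in>N. tent_partition N r d \<omega>) = 1"
    unfolding tent_partition_def using pos[of \<omega>] by (simp add: sum_divide_distrib[symmetric])
  show "tent_partition N r d \<omega> \<noteq> 0 \<Longrightarrow> dist d \<omega> < r"
    by (auto simp: tent_partition_def max_def split: if_splits)
qed

lemma bcontfun_compact:
  fixes f :: "'a::metric_space \<Rightarrow> 'b::metric_space"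
  assumes "compact (UNIV :: 'a set)" "continuous_on UNIV f"
  shows "f \<in> bcontfun"
  using compact_imp_bounded[OF compact_continuous_image[OF assms(2,1)]] assms(2)
  by (simp add: bcontfun_def)

lemma finite_net_compact:
  assumes "compact (UNIV :: 'a set)" and "0 < r"
  obtains N :: "'a::metric_space set" where "finite N" and "\<And>\<omega>. \<exists>d\<in>N. dist d \<omega> < r"
proof -
  obtain N :: "'a set" where "finite N" "UNIV \<subseteq> (\<Union>d\<in>N. ball d r)"
    using seq_compact_imp_totally_bounded[OF compact_imp_seq_compact[OF assms(1)]] \<open>0 < r\<close>
    by blast
  then show ?thesis
    using that by (auto simp: subset_eq)
qed

lemma Rats_dense_fun:
  fixes f :: "'b \<Rightarrow> real"
  assumes "0 < e"
  obtains s where "\<And>d. s d \<in> \<rat>" and "\<And>d. \<bar>s d - f d\<bar> < e"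
proof -
  have "\<exists>q\<in>\<rat>. \<bar>q - f d\<bar> < e" for d
  proof -
    obtain q where "q \<in> \<rat>" "f d - e < q" "q < f d + e"
      using Rats_dense_in_real[of "f d - e" "f d + e"] \<open>0 < e\<close> by auto
    then show ?thesis
      unfolding abs_diff_less_iff by blast
  qed
  then show ?thesis
    using that by metis
qed

lemma countable_dense_bcontfun:
  assumes compact: "compact (UNIV :: 'a set)"
  obtains D :: "('a::metric_space \<Rightarrow>\<^sub>C real) set" where "countable D" and "closure D = UNIV"
proof -
  define r :: "nat \<Rightarrow> real" where "r n = inverse (Suc n)" for n
  have "\<exists>N. finite N \<and> (\<forall>\<omega>::'a. \<exists>d\<in>N. dist d \<omega> < r n)" for n
    by (rule finite_net_compact[OF compact, of "r n"]) (auto simp: r_def)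
  then obtain N :: "nat \<Rightarrow> 'a set" where N: "\<And>n. finite (N n)" "\<And>n \<omega>. \<exists>d\<in>N n. dist d \<omega> < r n"
    by metis
  let ?p = "\<lambda>n. tent_partition (N n) (r n)"
  define g where "g n q \<omega> = (\<Sum>d\<in>N n. q d * ?p n d \<omega>)" for n q \<omega>
  have g: "g n q \<in> bcontfun" for n q
    unfolding g_def using tent_partition(1)[OF N]
    by (intro bcontfun_compact[OF compact] continuous_intros)
  define D where "D = (\<Union>n. (\<lambda>q. Bcontfun (g n q)) ` (N n \<rightarrow>\<^sub>E \<rat>))"
  have "countable D"
    unfolding D_def by (intro countable_UN countable_image countable_PiE N(1) countable_rat) auto
  moreover have "x \<in> closure D" for x
  proof (unfold closure_approachable_le, intro allI impI)
    fix e :: real assume "0 < e"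
    have "uniformly_continuous_on UNIV (apply_bcontfun x)"
      by (rule compact_uniformly_continuous[OF continuous_on_apply_bcontfun compact])
    then obtain \<delta> where "0 < \<delta>" and uc: "\<And>a b. dist a b < \<delta> \<Longrightarrow> dist (x a) (x b) < e / 2"
      unfolding uniformly_continuous_on_def by (metis UNIV_I \<open>0 < e\<close> half_gt_zero)
    obtain n where "r n < \<delta>"
      using reals_Archimedean[OF \<open>0 < \<delta>\<close>] by (auto simp: r_def)
    obtain s where s: "\<And>d. s d \<in> \<rat>" "\<And>d. \<bar>s d - x d\<bar> < e / 2"
      using Rats_dense_fun[of "e / 2" "apply_bcontfun x"] \<open>0 < e\<close> by auto
    have "\<bar>x \<omega> - g n s \<omega>\<bar> \<le> e" for \<omega>
      unfolding g_def
    proof (rule abs_diff_convex_sum_le[OF tent_partition(2,3)[OF N]])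
      fix d assume "?p n d \<omega> \<noteq> 0"
      then have "dist d \<omega> < \<delta>"
        using tent_partition(4)[OF N(1,2)] \<open>r n < \<delta>\<close> by force
      then show "\<bar>x \<omega> - s d\<bar> \<le> e"
        using uc[OF \<open>dist d \<omega> < \<delta>\<close>] s(2)[of d] by (simp only: dist_real_def abs_less_iff abs_le_iff) linarith
    qed
    moreover have "g n (restrict s (N n)) = g n s"
      unfolding g_def by (intro ext sum.cong) auto
    ultimately have "dist (Bcontfun (g n (restrict s (N n)))) x \<le> e"
      unfolding dist_norm
      by (intro norm_bound) (simp add: Bcontfun_inverse g abs_minus_commute)
    moreover have "Bcontfun (g n (restrict s (N n))) \<in> D"
      unfolding D_def using s(1) by (intro UN_I[of n] imageI) (auto simp: PiE_iff extensional_def)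
    ultimately show "\<exists>y\<in>D. dist y x \<le> e"
      by blast
  qed
  ultimately show ?thesis
    using that by blast
qed

lemma (in prob_space) forall_AE_eq_on_dense:
  fixes F :: "'b::topological_space \<Rightarrow> 'a \<Rightarrow> real" and c :: "'b \<Rightarrow> real" and D :: "'b set"
  assumes "countable D" and "closure D = UNIV"
    and continuous_F: "\<And>\<omega>. continuous_on UNIV (\<lambda>x. F x \<omega>)" and continuous_c: "continuous_on UNIV c"
    and measurable_F: "\<And>x. F x \<in> borel_measurable M"
    and AE_eq: "\<And>x. AE \<omega> in M. F x \<omega> = c x"
  shows "{\<omega> \<in> space M. \<forall>x. F x \<omega> = c x} \<in> events"
    and "prob {\<omega> \<in> space M. \<forall>x. F x \<omega> = c x} = 1"
proof -
  have "(\<forall>x. F x \<omega> = c x) \<longleftrightarrow> (\<forall>d\<in>D. F d \<omega> = c d)" for \<omega>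
  proof
    assume "\<forall>d\<in>D. F d \<omega> = c d"
    then have "closure D \<subseteq> {x. F x \<omega> = c x}"
      by (intro closure_minimal closed_Collect_eq continuous_F continuous_c) auto
    then show "\<forall>x. F x \<omega> = c x"
      using \<open>closure D = UNIV\<close> by auto
  qed simp
  then have eq: "{\<omega> \<in> space M. \<forall>x. F x \<omega> = c x} = {\<omega> \<in> space M. \<forall>d\<in>D. F d \<omega> = c d}"
    by simp
  show sets: "{\<omega> \<in> space M. \<forall>x. F x \<omega> = c x} \<in> events"
    unfolding eq using \<open>countable D\<close> measurable_F
    by (intro sets.sets_Collect_countable_All') measurable
  have "AE \<omega> in M. \<forall>d\<in>D. F d \<omega> = c d"
    using AE_eq by (subst AE_ball_countable[OF \<open>countable D\<close>]) blast
  then show "prob {\<omega> \<in> space M. \<forall>x. F x \<omega> = c x} = 1"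
    using AE_in_set_eq_1[OF sets] eq by simp
qed

text \<open>The properties of \<open>T = \<Sum> c\<^sub>k V\<^sup>k\<close>, for which \<open>T \<delta>\<^sub>\<omega> = \<Sum> c\<^sub>k \<delta>\<^bsub>\<phi>\<^sup>k \<omega>\<^esub>\<close>,
  that survive convex combinations.\<close>
definition invariant_dirac_kernel ::
    "('a::metric_space \<Rightarrow> 'a) \<Rightarrow> 'a measure \<Rightarrow> ('a dualC \<Rightarrow>\<^sub>L 'a dualC) \<Rightarrow> bool" where
  "invariant_dirac_kernel \<phi> \<mu> T \<longleftrightarrow>
    (\<forall>x. continuous_on UNIV (\<lambda>\<omega>. T (dirac_fun \<omega>) x)) \<and>
    (\<forall>x \<omega>. \<bar>T (dirac_fun \<omega>) x\<bar> \<le> norm x) \<and>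
    (\<forall>x. (\<integral>\<omega>. T (dirac_fun \<omega>) x \<partial>\<mu>) = (\<integral>\<omega>. apply_bcontfun x \<omega> \<partial>\<mu>)) \<and>
    (\<forall>x \<omega>. T (dirac_fun \<omega>) (Uop \<phi> x) = T (dirac_fun (\<phi> \<omega>)) x)"

lemma wstar_limit_dirac_invariant:
  assumes kernels: "\<And>n. invariant_dirac_kernel \<phi> \<mu> (Vs n)"
    and ergodic: "ergodic_op_seq \<phi> Vs" and lim: "wstar_op_conv Vs Q"
  shows "Q (dirac_fun (\<phi> \<omega>)) x = Q (dirac_fun \<omega>) x"
proof -
  have "Vs n (dirac_fun \<omega>) (Uop \<phi> x) = Vs n (dirac_fun (\<phi> \<omega>)) x" for n
    using kernels by (simp add: invariant_dirac_kernel_def)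
  moreover have "(\<lambda>n. Vs n (dirac_fun \<omega>) x - Vs n (dirac_fun \<omega>) (Uop \<phi> x)) \<longlonglongrightarrow> 0"
    using ergodic by (simp add: ergodic_op_seq_def blinfun.diff_left)
  ultimately have "(\<lambda>n. Vs n (dirac_fun \<omega>) x - Vs n (dirac_fun (\<phi> \<omega>)) x) \<longlonglongrightarrow> 0"
    by simp
  moreover have "(\<lambda>n. Vs n (dirac_fun \<omega>) x) \<longlonglongrightarrow> Q (dirac_fun \<omega>) x"
    using lim by (simp add: wstar_op_conv_def)
  ultimately have "(\<lambda>n. Vs n (dirac_fun (\<phi> \<omega>)) x) \<longlonglongrightarrow> Q (dirac_fun \<omega>) x"
    using tendsto_diff by fastforce
  moreover have "(\<lambda>n. Vs n (dirac_fun (\<phi> \<omega>)) x) \<longlonglongrightarrow> Q (dirac_fun (\<phi> \<omega>)) x"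
    using lim by (simp add: wstar_op_conv_def)
  ultimately show ?thesis
    using LIMSEQ_unique by blast
qed

locale ergodic_map =
  fixes \<phi> :: "'a::metric_space \<Rightarrow> 'a" and \<mu> :: "'a measure"
  assumes phi_ergodic: "phi_ergodic \<phi> \<mu>"
begin

sublocale prob_space \<mu>
  using phi_ergodic by (simp add: phi_ergodic_def)

lemma sets_eq_borel [measurable_cong]: "sets \<mu> = sets borel"
  using phi_ergodic by (simp add: phi_ergodic_def)

lemma space_eq_UNIV [simp]: "space \<mu> = UNIV"
  using sets_eq_imp_space_eq[OF sets_eq_borel] by simp

lemma measurable_map [measurable]: "\<phi> \<in> measurable \<mu> \<mu>"
  using phi_ergodic by (simp add: phi_ergodic_def)

lemma borel_measurable_continuous_on:
  "continuous_on UNIV f \<Longrightarrow> f \<in> borel_measurable \<mu>"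
  using borel_measurable_continuous_onI measurable_cong_sets[OF sets_eq_borel refl] by blast

lemma integrable_bounded_continuous_on:
  fixes f :: "'a \<Rightarrow> real"
  assumes "continuous_on UNIV f" "\<And>\<omega>. \<bar>f \<omega>\<bar> \<le> B"
  shows "integrable \<mu> f"
  by (rule integrable_const_bound[where B=B]) (auto simp: assms borel_measurable_continuous_on)

lemma distr_funpow: "distr \<mu> \<mu> (\<phi> ^^ k) = \<mu>"
proof (induction k)
  case (Suc k)
  have "distr \<mu> \<mu> (\<phi> \<circ> \<phi> ^^ k) = distr (distr \<mu> \<mu> (\<phi> ^^ k)) \<mu> \<phi>"
    by (rule distr_distr[symmetric]) measurable
  also have "\<dots> = \<mu>"
    using Suc phi_ergodic by (simp add: phi_ergodic_def)
  finally show ?case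
    by (simp only: funpow.simps)
qed (simp add: distr_id[unfolded id_def])

lemma integral_comp_funpow:
  fixes f :: "'a \<Rightarrow> real"
  assumes "f \<in> borel_measurable \<mu>"
  shows "(\<integral>\<omega>. f ((\<phi> ^^ k) \<omega>) \<partial>\<mu>) = integral\<^sup>L \<mu> f"
  using integral_distr[of "\<phi> ^^ k" \<mu> \<mu> f] assms by (simp add: distr_funpow)

text \<open>An invariant function exceeding its mean on an invariant set of positive measure would,
  by ergodicity, exceed it almost everywhere, which is impossible.\<close>
lemma AE_invariant_le_integral:
  fixes f :: "'a \<Rightarrow> real"
  assumes f: "integrable \<mu> f" and invariant: "\<And>\<omega>. f (\<phi> \<omega>) = f \<omega>"
  shows "AE \<omega> in \<mu>. f \<omega> \<le> integral\<^sup>L \<mu> f"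
proof -
  define A where "A = {\<omega>. integral\<^sup>L \<mu> f < f \<omega>}"
  have A_sets: "A \<in> sets \<mu>"
    using f unfolding A_def by (simp add: pred_sets2[where N=borel] borel_measurable_integrable)
  have "\<phi> -` A = A"
    by (auto simp: A_def invariant)
  then have "emeasure \<mu> A = 0 \<or> emeasure \<mu> A = 1"
    using phi_ergodic A_sets by (simp add: phi_ergodic_def)
  moreover have "emeasure \<mu> A \<noteq> 1"
  proof
    assume "emeasure \<mu> A = 1"
    then have AE_A: "AE \<omega> in \<mu>. \<omega> \<in> A"
      using AE_in_set_eq_1[OF A_sets] by (simp add: emeasure_eq_measure)
    then have nonneg: "AE \<omega> in \<mu>. 0 \<le> f \<omega> - integral\<^sup>L \<mu> f"
      by eventually_elim (auto simp: A_def)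
    have "integral\<^sup>L \<mu> (\<lambda>\<omega>. f \<omega> - integral\<^sup>L \<mu> f) = 0"
      using f prob_space by simp
    then have "AE \<omega> in \<mu>. f \<omega> - integral\<^sup>L \<mu> f = 0"
      using integral_nonneg_eq_0_iff_AE[OF _ nonneg] f by simp
    with AE_A have "AE \<omega> in \<mu>. False"
      by eventually_elim (auto simp: A_def)
    then show False
      by simp
  qed
  ultimately have "AE \<omega> in \<mu>. \<omega> \<notin> A"
    using AE_iff_measurable[OF A_sets, of "\<lambda>\<omega>. \<omega> \<notin> A"] by auto
  then show ?thesis
    by eventually_elim (auto simp: A_def)
qed

lemma AE_invariant_eq_integral:
  fixes f :: "'a \<Rightarrow> real"
  assumes f: "integrable \<mu> f" and invariant: "\<And>\<omega>. f (\<phi> \<omega>) = f \<omega>"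
  shows "AE \<omega> in \<mu>. f \<omega> = integral\<^sup>L \<mu> f"
proof -
  have "AE \<omega> in \<mu>. f \<omega> \<le> integral\<^sup>L \<mu> f"
    using assms by (rule AE_invariant_le_integral)
  moreover have "AE \<omega> in \<mu>. - f \<omega> \<le> integral\<^sup>L \<mu> (\<lambda>\<omega>. - f \<omega>)"
    using assms by (intro AE_invariant_le_integral) auto
  ultimately show ?thesis
    by eventually_elim simp
qed

lemma bounded_linear_integral_bcontfun:
  "bounded_linear (\<lambda>x :: 'a \<Rightarrow>\<^sub>C real. \<integral>\<omega>. x \<omega> \<partial>\<mu>)"
proof (rule bounded_linear_intro[where K=1])
  have integrable: "integrable \<mu> (apply_bcontfun x)" for x :: "'a \<Rightarrow>\<^sub>C real"
    using norm_bounded[of x] by (intro integrable_bounded_continuous_on) auto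
  fix x y :: "'a \<Rightarrow>\<^sub>C real" and r :: real
  show "(\<integral>\<omega>. (x + y) \<omega> \<partial>\<mu>) = (\<integral>\<omega>. x \<omega> \<partial>\<mu>) + (\<integral>\<omega>. y \<omega> \<partial>\<mu>)"
    using integrable by simp
  show "(\<integral>\<omega>. (r *\<^sub>R x) \<omega> \<partial>\<mu>) = r *\<^sub>R (\<integral>\<omega>. x \<omega> \<partial>\<mu>)"
    by simp
  have "\<bar>\<integral>\<omega>. x \<omega> \<partial>\<mu>\<bar> \<le> (\<integral>\<omega>. \<bar>x \<omega>\<bar> \<partial>\<mu>)"
    by (rule integral_abs_bound)
  also have "\<dots> \<le> norm x"
    using integrable norm_bounded[of x] by (intro integral_le_const) auto
  finally show "norm (\<integral>\<omega>. x \<omega> \<partial>\<mu>) \<le> norm x * 1"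
    by simp
qed

lemma wstar_limit_dirac_kernel:
  assumes kernels: "\<And>n. invariant_dirac_kernel \<phi> \<mu> (Vs n)" and lim: "wstar_op_conv Vs Q"
  shows "(\<lambda>\<omega>. Q (dirac_fun \<omega>) x) \<in> borel_measurable \<mu>"
    and "integrable \<mu> (\<lambda>\<omega>. Q (dirac_fun \<omega>) x)"
    and "(\<integral>\<omega>. Q (dirac_fun \<omega>) x \<partial>\<mu>) = (\<integral>\<omega>. apply_bcontfun x \<omega> \<partial>\<mu>)"
proof -
  let ?G = "\<lambda>n \<omega>. Vs n (dirac_fun \<omega>) x" and ?F = "\<lambda>\<omega>. Q (dirac_fun \<omega>) x"
  have G: "?G n \<in> borel_measurable \<mu>" "\<bar>?G n \<omega>\<bar> \<le> norm x"
    "integral\<^sup>L \<mu> (?G n) = (\<integral>\<omega>. apply_bcontfun x \<omega> \<partial>\<mu>)" for n \<omega>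
    using kernels[of n] by (auto simp: invariant_dirac_kernel_def borel_measurable_continuous_on)
  have G_lim: "(\<lambda>n. ?G n \<omega>) \<longlonglongrightarrow> ?F \<omega>" for \<omega>
    using lim by (simp add: wstar_op_conv_def)
  show F: "?F \<in> borel_measurable \<mu>"
    using borel_measurable_LIMSEQ_real[OF G_lim G(1)] .
  have dominated: "AE \<omega> in \<mu>. (\<lambda>n. ?G n \<omega>) \<longlonglongrightarrow> ?F \<omega>"
    "\<And>n. AE \<omega> in \<mu>. norm (?G n \<omega>) \<le> norm x" "integrable \<mu> (\<lambda>_. norm x)"
    using G_lim G(2) by auto
  show "integrable \<mu> ?F"
    using integrable_dominated_convergence[OF F G(1) dominated(3,1,2)] .
  have "(\<lambda>n. integral\<^sup>L \<mu> (?G n)) \<longlonglongrightarrow> integral\<^sup>L \<mu> ?F"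
    using integral_dominated_convergence[OF F G(1) dominated(3,1,2)] .
  then show "integral\<^sup>L \<mu> ?F = (\<integral>\<omega>. apply_bcontfun x \<omega> \<partial>\<mu>)"
    using LIMSEQ_unique[OF _ tendsto_const] by (simp add: G(3))
qed

end

locale continuous_ergodic_map = ergodic_map +
  assumes continuous_map: "continuous_on UNIV \<phi>"
begin

lemma invariant_dirac_kernel_Vpow: "invariant_dirac_kernel \<phi> \<mu> (Vpow \<phi> k)"
  unfolding invariant_dirac_kernel_def Vpow_dirac_apply[OF continuous_map]
proof (intro conjI allI)
  fix x :: "'a \<Rightarrow>\<^sub>C real" and \<omega>
  show "continuous_on UNIV (\<lambda>\<omega>. apply_bcontfun x ((\<phi> ^^ k) \<omega>))"
    by (rule continuous_on_compose2[OF continuous_on_apply_bcontfun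
          continuous_on_funpow[OF continuous_map] subset_UNIV])
  show "\<bar>apply_bcontfun x ((\<phi> ^^ k) \<omega>)\<bar> \<le> norm x"
    using norm_bounded[of x] by simp
  show "(\<integral>\<omega>. apply_bcontfun x ((\<phi> ^^ k) \<omega>) \<partial>\<mu>) = (\<integral>\<omega>. apply_bcontfun x \<omega> \<partial>\<mu>)"
    by (rule integral_comp_funpow) (simp add: borel_measurable_continuous_on)
  show "Uop \<phi> x ((\<phi> ^^ k) \<omega>) = apply_bcontfun x ((\<phi> ^^ k) (\<phi> \<omega>))"
    by (simp add: Uop_apply[OF continuous_map] funpow_swap1)
qed

lemma convex_invariant_dirac_kernel: "convex {T. invariant_dirac_kernel \<phi> \<mu> T}"
proof (rule convexI, unfold mem_Collect_eq)
  fix A B :: "'a dualC \<Rightarrow>\<^sub>L 'a dualC" and u v :: real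
  assume A: "invariant_dirac_kernel \<phi> \<mu> A" and B: "invariant_dirac_kernel \<phi> \<mu> B"
    and uv: "0 \<le> u" "0 \<le> v" "u + v = 1"
  let ?a = "\<lambda>x \<omega>. A (dirac_fun \<omega>) x" and ?b = "\<lambda>x \<omega>. B (dirac_fun \<omega>) x"
  have cont: "continuous_on UNIV (?a x)" "continuous_on UNIV (?b x)"
    and bound: "\<bar>?a x \<omega>\<bar> \<le> norm x" "\<bar>?b x \<omega>\<bar> \<le> norm x" for x \<omega>
    using A B by (auto simp: invariant_dirac_kernel_def)
  have "\<bar>u * ?a x \<omega> + v * ?b x \<omega>\<bar> \<le> u * norm x + v * norm x" for x \<omega>
  proof -
    have "\<bar>u * ?a x \<omega> + v * ?b x \<omega>\<bar> \<le> u * \<bar>?a x \<omega>\<bar> + v * \<bar>?b x \<omega>\<bar>"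
      using uv abs_triangle_ineq[of "u * ?a x \<omega>" "v * ?b x \<omega>"] by (simp add: abs_mult)
    also have "\<dots> \<le> u * norm x + v * norm x"
      using uv bound by (intro add_mono mult_left_mono) auto
    finally show ?thesis .
  qed
  moreover have "(\<integral>\<omega>. u * ?a x \<omega> + v * ?b x \<omega> \<partial>\<mu>) = (u + v) * (\<integral>\<omega>. apply_bcontfun x \<omega> \<partial>\<mu>)"
    for x
    using integrable_bounded_continuous_on[OF cont(1) bound(1)]
      integrable_bounded_continuous_on[OF cont(2) bound(2)] A B
    by (simp add: invariant_dirac_kernel_def distrib_right)
  ultimately show "invariant_dirac_kernel \<phi> \<mu> (u *\<^sub>R A + v *\<^sub>R B)"
    using A B uv(3)
    by (simp add: invariant_dirac_kernel_def blinfun.add_left blinfun.scaleR_left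
        continuous_on_add continuous_on_mult_left distrib_right[symmetric])
qed

lemma invariant_dirac_kernel_convex_hull:
  "T \<in> convex hull (range (Vpow \<phi>)) \<Longrightarrow> invariant_dirac_kernel \<phi> \<mu> T"
  using hull_minimal[of "range (Vpow \<phi>)" "{T. invariant_dirac_kernel \<phi> \<mu> T}" convex]
    convex_invariant_dirac_kernel invariant_dirac_kernel_Vpow
  by blast

lemma invariant_dirac_kernel_ergodic_op_seq:
  "ergodic_op_seq \<phi> Vs \<Longrightarrow> invariant_dirac_kernel \<phi> \<mu> (Vs n)"
  using invariant_dirac_kernel_convex_hull by (simp add: ergodic_op_seq_def)

lemma AE_wstar_limit_dirac_eq_integral:
  assumes ergodic: "ergodic_op_seq \<phi> Vs" and lim: "wstar_op_conv Vs Q"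
  shows "AE \<omega> in \<mu>. Q (dirac_fun \<omega>) x = (\<integral>\<omega>. apply_bcontfun x \<omega> \<partial>\<mu>)"
proof -
  note kernels = invariant_dirac_kernel_ergodic_op_seq[OF ergodic]
  show ?thesis
    using AE_invariant_eq_integral[OF wstar_limit_dirac_kernel(2)[OF kernels lim]]
      wstar_limit_dirac_invariant[OF kernels ergodic lim] wstar_limit_dirac_kernel(3)[OF kernels lim]
    by simp
qed

end

theorem corollary4p2:
  fixes \<phi> :: "'a::metric_space \<Rightarrow> 'a"
    and Vs :: "nat \<Rightarrow> 'a dualC \<Rightarrow>\<^sub>L 'a dualC"
    and Q :: "'a dualC \<Rightarrow>\<^sub>L 'a dualC"
    and \<mu> :: "'a measure"
  assumes "compact (UNIV :: 'a set)"
    and "continuous_on UNIV \<phi>"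
    and "ergodic_op_seq \<phi> Vs"
    and "wstar_op_conv Vs Q"
    and "phi_ergodic \<phi> \<mu>"
  shows "{\<omega>. \<forall>x. blinfun_apply (Q (dirac_fun \<omega>)) x = (\<integral>\<omega>'. apply_bcontfun x \<omega>' \<partial>\<mu>)} \<in> sets borel
    \<and> emeasure \<mu> {\<omega>. \<forall>x. blinfun_apply (Q (dirac_fun \<omega>)) x = (\<integral>\<omega>'. apply_bcontfun x \<omega>' \<partial>\<mu>)} = 1"
proof -
  interpret continuous_ergodic_map \<phi> \<mu>
    using assms(2,5) by unfold_locales
  obtain D :: "('a \<Rightarrow>\<^sub>C real) set" where D: "countable D" "closure D = UNIV"
    using countable_dense_bcontfun[OF assms(1)] .
  let ?F = "\<lambda>x \<omega>. Q (dirac_fun \<omega>) x" and ?c = "\<lambda>x :: 'a \<Rightarrow>\<^sub>C real. \<integral>\<omega>. apply_bcontfun x \<omega> \<partial>\<mu>"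
  have continuous_c: "continuous_on UNIV ?c"
    by (rule linear_continuous_on[OF bounded_linear_integral_bcontfun])
  have continuous_F: "continuous_on UNIV (\<lambda>x. ?F x \<omega>)" for \<omega>
    by (intro continuous_intros)
  have measurable_F: "?F x \<in> borel_measurable \<mu>" for x
    using wstar_limit_dirac_kernel(1)[OF invariant_dirac_kernel_ergodic_op_seq[OF assms(3)] assms(4)] .
  note dense = forall_AE_eq_on_dense[OF D continuous_F continuous_c measurable_F
      AE_wstar_limit_dirac_eq_integral[OF assms(3,4)]]
  from dense(1) dense(2) show ?thesis
    using sets_eq_borel by (simp add: emeasure_eq_measure)
qed

end
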